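(* Let $k\ge2$, $n\ge1$, $A=\{0<1<\cdots<k-1\}$, and let $v\in\Gamma_{k,n}$. Then the standard permutation $\pi(v)$ of $[k^{n}]$ is $\pi=\bigcup_{i=0}^{k-1}\pi_{i}$, a union of $k$ order-preserving injective partial maps with $\mathrm{dom}\,\pi_{i}=\{x\in[k^{n}]:\text{the first digit of the }n\text{-digit base-}k\text{ representation of }x\text{ is }i\}$ for $0\le i\le k-1$. The sets $\mathrm{ran}\,\pi_{i}$ partition $[k^{n}]$, and each $\mathrm{ran}\,\pi_{i}$ is a transversal of the partition of $[k^{n}]$ into the intervals $[jk,(j+1)k-1]$, $0\le j\le k^{n-1}-1$ (i.e. meets each such interval in exactly one point).
   Context: $[N]=\{0<1<\cdots<N-1\}$. $G\subseteq A^{k}$ is the set of words of length $k$ in which each letter of $A$ occurs exactly once, and $\Gamma_{k,n}=G^{k^{n-1}}$, the set of concatenations of $k^{n-1}$ words from $G$. Standard permutation of $w\in A^{N}$: let $f(w)$ be the letters of $w$ in nondecreasing order; for each letter $a$, $\pi_{a}$ is the unique order-preserving injective partial map on $[N]$ with domain the set of positions (from $0$) of $a$ in $f(w)$ and range the set of positions of $a$ in $w$; $\pi(w)=\bigcup_{a}\pi_{a}$. *)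

theory Defs
  imports Main
begin

text \<open>Words over the alphabet A = {0 < 1 < ... < k-1} are lists of naturals.
  Positions are counted from 0.  Partial maps on [N] are represented by their graphs
  (relations of type nat rel).\<close>

definition G :: "nat \<Rightarrow> nat list set" where
  "G k = {w. length w = k \<and> set w \<subseteq> {..<k} \<and> (\<forall>a<k. count_list w a = 1)}"

definition Gamma :: "nat \<Rightarrow> nat \<Rightarrow> nat list set" where
  "Gamma k n = {concat ws | ws. length ws = k ^ (n - 1) \<and> (\<forall>w\<in>set ws. w \<in> G k)}"

definition positions :: "nat \<Rightarrow> nat list \<Rightarrow> nat set" where
  "positions a w = {i. i < length w \<and> w ! i = a}"

definition op_inj_pmap :: "nat rel \<Rightarrow> bool" where
  "op_inj_pmap p \<longleftrightarrow> single_valued p \<and> single_valued (p\<inverse>) \<and>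
     (\<forall>x y x' y'. (x, y) \<in> p \<longrightarrow> (x', y') \<in> p \<longrightarrow> x < x' \<longrightarrow> y < y')"

definition std_perm_part :: "nat list \<Rightarrow> nat \<Rightarrow> nat rel" where
  "std_perm_part w a = (THE p. op_inj_pmap p \<and> Domain p = positions a (sort w)
                                \<and> Range p = positions a w)"

definition std_perm :: "nat list \<Rightarrow> nat rel" where
  "std_perm w = (\<Union>a\<in>set w. std_perm_part w a)"

end

theory Submission
  imports Defs "HOL-Library.Multiset"
begin

text \<open>Every letter occurs k^(n-1) = m times in v, so sort v is 0^m 1^m ... (k-1)^m and the
  positions of i in it form the i-th block of length m, i.e. the numbers whose leading base-k
  digit is i.  An order-preserving injective partial map between finite sets is determined by
  its domain and range, since it must match elements of equal rank.  Its range, the set of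
  positions of i in v, meets each factor of v of length k exactly once, because each factor
  is a permutation of the alphabet.\<close>

definition rank :: "nat set \<Rightarrow> nat \<Rightarrow> nat" where
  "rank S x = card {s \<in> S. s < x}"

lemma rank_less_card: "finite S \<Longrightarrow> x \<in> S \<Longrightarrow> rank S x < card S"
  unfolding rank_def by (rule psubset_card_mono) auto

lemma rank_strict_mono: "finite S \<Longrightarrow> x \<in> S \<Longrightarrow> x < y \<Longrightarrow> rank S x < rank S y"
  unfolding rank_def by (rule psubset_card_mono) auto

lemma rank_mono: "finite S \<Longrightarrow> x \<le> y \<Longrightarrow> rank S x \<le> rank S y"
  unfolding rank_def by (rule card_mono) auto

lemma inj_on_rank: "finite S \<Longrightarrow> inj_on (rank S) S"
  by (metis inj_on_def less_irrefl linorder_neqE_nat rank_strict_mono)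

lemma rank_image: "finite S \<Longrightarrow> rank S ` S = {..<card S}"
  by (rule card_subset_eq) (auto simp: rank_less_card card_image inj_on_rank)

definition rank_match :: "nat set \<Rightarrow> nat set \<Rightarrow> nat rel" where
  "rank_match D R = {(x, y). x \<in> D \<and> y \<in> R \<and> rank D x = rank R y}"

lemma converse_rank_match: "(rank_match D R)\<inverse> = rank_match R D"
  unfolding rank_match_def by auto

lemma single_valued_rank_match: "finite R \<Longrightarrow> single_valued (rank_match D R)"
  using inj_on_rank[of R] by (auto simp: single_valued_def rank_match_def inj_on_def)

lemma op_inj_pmap_rank_match:
  assumes "finite D" "finite R"
  shows "op_inj_pmap (rank_match D R)"
  unfolding op_inj_pmap_def
proof (intro conjI allI impI)
  show "single_valued (rank_match D R)" "single_valued ((rank_match D R)\<inverse>)"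
    using assms by (simp_all add: single_valued_rank_match converse_rank_match)
  fix x y x' y'
  assume "(x, y) \<in> rank_match D R" "(x', y') \<in> rank_match D R" "x < x'"
  then have "x \<in> D" "rank D x = rank R y" "rank D x' = rank R y'"
    by (auto simp: rank_match_def)
  with \<open>x < x'\<close> have "rank R y < rank R y'"
    using rank_strict_mono[OF assms(1)] by metis
  then show "y < y'"
    using rank_mono[OF assms(2), of y' y] by linarith
qed

lemma Domain_rank_match:
  assumes "finite D" "finite R" "card D = card R"
  shows "Domain (rank_match D R) = D"
proof
  show "D \<subseteq> Domain (rank_match D R)"
  proof
    fix x assume "x \<in> D"
    then have "rank D x \<in> rank R ` R"
      using rank_image[OF assms(2)] rank_less_card[OF assms(1)] assms(3) by auto
    with \<open>x \<in> D\<close> show "x \<in> Domain (rank_match D R)"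
      by (auto simp: rank_match_def)
  qed
qed (auto simp: rank_match_def)

lemma Range_rank_match:
  "finite D \<Longrightarrow> finite R \<Longrightarrow> card D = card R \<Longrightarrow> Range (rank_match D R) = R"
  by (metis Domain_converse Domain_rank_match converse_rank_match)

lemma op_inj_pmap_less_iff:
  assumes "op_inj_pmap p" "(x, y) \<in> p" "(x', y') \<in> p"
  shows "x < x' \<longleftrightarrow> y < y'"
proof -
  have mono: "\<And>a b a' b'. (a, b) \<in> p \<Longrightarrow> (a', b') \<in> p \<Longrightarrow> a < a' \<Longrightarrow> b < b'"
    using assms(1) unfolding op_inj_pmap_def by blast
  have "x = x' \<longleftrightarrow> y = y'"
    using assms unfolding op_inj_pmap_def single_valued_def by blast
  then show ?thesis
    using mono[OF assms(2,3)] mono[OF assms(3,2)] by (metis less_asym linorder_neqE_nat)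
qed

lemma op_inj_pmap_rank_eq:
  assumes p: "op_inj_pmap p" and xy: "(x, y) \<in> p"
  shows "rank (Domain p) x = rank (Range p) y"
proof -
  define below where "below = {(a, b) \<in> p. a < x}"
  have "inj_on fst below" "inj_on snd below"
    using p unfolding op_inj_pmap_def single_valued_def inj_on_def below_def by auto
  moreover have "fst ` below = {a \<in> Domain p. a < x}"
    unfolding below_def by force
  moreover have "snd ` below = {b \<in> Range p. b < y}"
    unfolding below_def using op_inj_pmap_less_iff[OF p _ xy] by force
  ultimately show ?thesis
    unfolding rank_def using card_image by metis
qed

lemma op_inj_pmap_eq_rank_match:
  assumes p: "op_inj_pmap p" and fin: "finite (Range p)"
  shows "p = rank_match (Domain p) (Range p)"
proof
  show "p \<subseteq> rank_match (Domain p) (Range p)"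
    using op_inj_pmap_rank_eq[OF p] by (force simp: rank_match_def)
  show "rank_match (Domain p) (Range p) \<subseteq> p"
  proof
    fix z assume "z \<in> rank_match (Domain p) (Range p)"
    then obtain x y y' where z: "z = (x, y)" "y \<in> Range p" "(x, y') \<in> p"
      and ranks: "rank (Domain p) x = rank (Range p) y"
      by (auto simp: rank_match_def)
    have "rank (Range p) y' = rank (Range p) y"
      using op_inj_pmap_rank_eq[OF p z(3)] ranks by simp
    then have "y' = y"
      using inj_on_rank[OF fin] z by (auto simp: inj_on_def)
    with z show "z \<in> p" by simp
  qed
qed

lemma the_op_inj_pmap_eq_rank_match:
  assumes "finite D" "finite R" "card D = card R"
  shows "(THE p. op_inj_pmap p \<and> Domain p = D \<and> Range p = R) = rank_match D R"
proof (rule the_equality)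
  show "op_inj_pmap (rank_match D R) \<and> Domain (rank_match D R) = D \<and> Range (rank_match D R) = R"
    using assms by (simp add: op_inj_pmap_rank_match Domain_rank_match Range_rank_match)
  fix p assume "op_inj_pmap p \<and> Domain p = D \<and> Range p = R"
  then show "p = rank_match D R"
    using op_inj_pmap_eq_rank_match assms(2) by blast
qed

lemma finite_positions: "finite (positions a w)"
  unfolding positions_def by simp

lemma card_positions: "card (positions a w) = count_list w a"
  unfolding positions_def count_list_eq_length_filter length_filter_conv_card
  by (rule arg_cong[where f = card]) auto

lemma card_positions_sort: "card (positions a (sort w)) = card (positions a w)"
  by (metis card_positions count_mset mset_sort)

lemma std_perm_part_eq_rank_match:
  "std_perm_part w a = rank_match (positions a (sort w)) (positions a w)"
  unfolding std_perm_part_def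
  by (rule the_op_inj_pmap_eq_rank_match[OF finite_positions finite_positions card_positions_sort])

lemma op_inj_pmap_std_perm_part: "op_inj_pmap (std_perm_part w a)"
  by (simp add: std_perm_part_eq_rank_match op_inj_pmap_rank_match finite_positions)

lemma Domain_std_perm_part: "Domain (std_perm_part w a) = positions a (sort w)"
  unfolding std_perm_part_eq_rank_match
  by (rule Domain_rank_match[OF finite_positions finite_positions card_positions_sort])

lemma Range_std_perm_part: "Range (std_perm_part w a) = positions a w"
  unfolding std_perm_part_eq_rank_match
  by (rule Range_rank_match[OF finite_positions finite_positions card_positions_sort])

lemma UN_positions: "set w \<subseteq> A \<Longrightarrow> (\<Union>a\<in>A. positions a w) = {..<length w}"
  unfolding positions_def by (auto dest: nth_mem)

lemma length_concat_equal_length: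
  "\<forall>w\<in>set ws. length w = k \<Longrightarrow> length (concat ws) = k * length ws"
  by (induction ws) auto

lemma nth_concat_equal_length:
  "\<forall>w\<in>set ws. length w = k \<Longrightarrow> x < k * length ws \<Longrightarrow>
    concat ws ! x = ws ! (x div k) ! (x mod k)"
proof (induction ws arbitrary: x)
  case (Cons w ws)
  show ?case
  proof (cases "x < k")
    case True
    then show ?thesis using Cons.prems by (simp add: nth_append)
  next
    case False
    have "k > 0"
      using Cons.prems(2) by (cases k) auto
    then have "x div k = Suc ((x - k) div k)" "x mod k = (x - k) mod k"
      using False by (simp_all add: le_div_geq le_mod_geq)
    moreover have "concat ws ! (x - k) = ws ! ((x - k) div k) ! ((x - k) mod k)"
      using Cons False by auto
    ultimately show ?thesis
      using Cons.prems False by (simp add: nth_append)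
  qed
qed simp

lemma count_list_G: "w \<in> G k \<Longrightarrow> count_list w a = (if a < k then 1 else 0)"
  unfolding G_def by (auto simp: count_list_0_iff)

lemma positions_G: "w \<in> G k \<Longrightarrow> a < k \<Longrightarrow> \<exists>r. positions a w = {r}"
  by (simp add: card_1_singleton_iff[symmetric] card_positions count_list_G)

lemma count_list_concat_G:
  "\<forall>w\<in>set ws. w \<in> G k \<Longrightarrow> count_list (concat ws) a = (if a < k then length ws else 0)"
  by (induction ws) (auto simp: count_list_G)

lemma set_concat_G:
  assumes "\<forall>w\<in>set ws. w \<in> G k" "ws \<noteq> []"
  shows "set (concat ws) = {..<k}"
proof -
  have "b \<in> set (concat ws) \<longleftrightarrow> count_list (concat ws) b \<noteq> 0" for b
    by (metis count_list_0_iff)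
  then have "b \<in> set (concat ws) \<longleftrightarrow> b < k" for b
    using count_list_concat_G[OF assms(1), of b] assms(2) by simp
  then show ?thesis by auto
qed

lemma count_list_blocks:
  "count_list (concat (map (\<lambda>a. replicate m a) [0..<k])) b = (if b < k then m else 0)"
  by (induction k) (auto simp: count_list_eq_length_filter filter_replicate)

lemma nth_blocks:
  assumes "x < k * m"
  shows "concat (map (\<lambda>a. replicate m a) [0..<k]) ! x = x div m"
proof -
  have "m > 0"
    using assms by (cases "m = 0") auto
  have "x div m < k"
    using less_mult_imp_div_less[OF assms] .
  have "concat (map (\<lambda>a. replicate m a) [0..<k]) ! x
      = map (\<lambda>a. replicate m a) [0..<k] ! (x div m) ! (x mod m)"
    using assms by (intro nth_concat_equal_length) (auto simp: mult.commute)
  also have "\<dots> = x div m"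
    using \<open>m > 0\<close> \<open>x div m < k\<close> by simp
  finally show ?thesis .
qed

lemma length_blocks: "length (concat (map (\<lambda>a. replicate m a) [0..<k])) = k * m"
  by (subst length_concat_equal_length[of _ m]) auto

lemma sort_concat_G:
  assumes "\<forall>w\<in>set ws. w \<in> G k"
  shows "sort (concat ws) = concat (map (\<lambda>a. replicate (length ws) a) [0..<k])"
proof (rule properties_for_sort)
  show "mset (concat (map (\<lambda>a. replicate (length ws) a) [0..<k])) = mset (concat ws)"
    by (simp add: multiset_eq_iff count_mset count_list_blocks count_list_concat_G[OF assms])
  show "sorted (concat (map (\<lambda>a. replicate (length ws) a) [0..<k]))"
    by (auto simp: sorted_iff_nth_mono length_blocks nth_blocks intro: div_le_mono)
qed

lemma positions_sort_concat_G:
  "\<forall>w\<in>set ws. w \<in> G k \<Longrightarrow>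
    positions a (sort (concat ws)) = {x. x < k * length ws \<and> x div length ws = a}"
  by (auto simp: sort_concat_G positions_def length_blocks nth_blocks)

lemma positions_concat_G_in_block:
  assumes ws: "\<forall>w\<in>set ws. w \<in> G k" and j: "j < length ws" and a: "a < k"
  shows "\<exists>!x. x \<in> positions a (concat ws) \<and> j * k \<le> x \<and> x < (j + 1) * k"
proof -
  have ws_length: "\<forall>w\<in>set ws. length w = k"
    using ws unfolding G_def by auto
  obtain r where r: "positions a (ws ! j) = {r}"
    using positions_G ws j a by (meson nth_mem)
  have r_lt: "r < k"
    using r ws_length j unfolding positions_def by (auto dest: nth_mem)
  have "x \<in> positions a (concat ws) \<longleftrightarrow> x = j * k + r"
    if "j * k \<le> x" "x < (j + 1) * k" for x
  proof -
    define s where "s = x - j * k"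
    have s: "x = j * k + s" "s < k"
      using that unfolding s_def by auto
    have "(j + 1) * k \<le> length ws * k"
      using j by (intro mult_le_mono1) simp
    then have "x < k * length ws"
      using that by (simp add: mult.commute)
    then have "concat ws ! x = ws ! j ! s"
      using nth_concat_equal_length[OF ws_length] s by simp
    moreover have "x < length (concat ws)"
      using \<open>x < k * length ws\<close> length_concat_equal_length[OF ws_length] by simp
    ultimately have "x \<in> positions a (concat ws) \<longleftrightarrow> s \<in> positions a (ws ! j)"
      using s ws_length j unfolding positions_def by auto
    then show ?thesis
      using r s by auto
  qed
  then show ?thesis
    using r_lt by (intro ex1I[of _ "j * k + r"]) auto
qed

theorem lemma3p6:
  fixes k n :: nat and v :: "nat list"
  assumes "k \<ge> 2" and "n \<ge> 1" and "v \<in> Gamma k n"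
  shows "std_perm v = (\<Union>i<k. std_perm_part v i)
    \<and> (\<forall>i<k. op_inj_pmap (std_perm_part v i)
         \<and> Domain (std_perm_part v i) = {x. x < k ^ n \<and> x div k ^ (n - 1) = i})
    \<and> (\<forall>i<k. \<forall>j<k. i \<noteq> j \<longrightarrow> Range (std_perm_part v i) \<inter> Range (std_perm_part v j) = {})
    \<and> (\<Union>i<k. Range (std_perm_part v i)) = {..<k ^ n}
    \<and> (\<forall>i<k. \<forall>j<k ^ (n - 1). \<exists>!x. x \<in> Range (std_perm_part v i) \<and> j * k \<le> x \<and> x \<le> (j + 1) * k - 1)"
proof -
  obtain ws where v: "v = concat ws" and len: "length ws = k ^ (n - 1)"
    and ws: "\<forall>w\<in>set ws. w \<in> G k"
    using assms(3) unfolding Gamma_def by auto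
  have kn: "k ^ n = k * length ws"
    using len assms(2) by (cases n) auto
  have "ws \<noteq> []"
    using len assms(1) by auto
  then have set_v: "set v = {..<k}"
    using set_concat_G[OF ws] v by simp
  have length_v: "length v = k ^ n"
    using ws kn v unfolding G_def by (simp add: length_concat_equal_length)
  have block: "x \<le> (j + 1) * k - 1 \<longleftrightarrow> x < (j + 1) * k" for x j
    using assms(1) by auto
  show ?thesis
    unfolding std_perm_def Range_std_perm_part block
  proof (intro conjI allI impI)
    show "(\<Union>a\<in>set v. std_perm_part v a) = (\<Union>i<k. std_perm_part v i)"
      using set_v by simp
    show "op_inj_pmap (std_perm_part v i)" for i
      by (rule op_inj_pmap_std_perm_part)
    show "Domain (std_perm_part v i) = {x. x < k ^ n \<and> x div k ^ (n - 1) = i}" for i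
      using positions_sort_concat_G[OF ws] v kn len by (simp add: Domain_std_perm_part)
    show "positions i v \<inter> positions j v = {}" if "i \<noteq> j" for i j
      using that unfolding positions_def by auto
    show "(\<Union>i<k. positions i v) = {..<k ^ n}"
      using UN_positions[of v "{..<k}"] set_v length_v by simp
    show "\<exists>!x. x \<in> positions i v \<and> j * k \<le> x \<and> x < (j + 1) * k"
      if "i < k" "j < k ^ (n - 1)" for i j
      using positions_concat_G_in_block[OF ws] that len v by simp
  qed
qed

end
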